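(* Let $0<a\le 1$. For every $\epsilon>0$ there is $c_1\in(\tfrac12,1)$ such that, for the two-phase marking scheme with parameter $c_1$ run alongside the biased random transpositions walk on $N$ cards, the first time $T_N$ at which all $N$ cards are marked satisfies $$P\Big(T_N>(1+\epsilon)\frac{1}{2a}N\log N\Big)=o(1)\quad\text{as }N\to\infty .$$
   Context: Biased random transpositions walk: $N=2n$ cards; $n$ are $a$-cards with weight $p(c)=a$ and $n$ are $b$-cards with weight $p(c)=b$, where $0<a\le1$, $b=2-a$. At each step $t$ two cards $R_t,L_t$ are chosen independently, each equal to card $c$ with probability $p(c)/N$, and their positions are exchanged (nothing if $R_t=L_t$). Two-phase marking scheme with parameter $c_1\in(\tfrac12,1)$, using auxiliary independent randomness; initially no card is marked; let $k$ be the number of marked cards at the start of step $t$. Phase 1 ($k<c_1N$): if $R_t$ and $L_t$ are both unmarked, mark $R_t$ with probability $\frac{a^2}{p(R_t)p(L_t)}$; otherwise do nothing. Phase 2 ($c_1N\le k<N$): assign to each unmarked card $u$ an ordered pair $(r(u),\ell(u))$ of marked cards such that $u\mapsto(r(u),\ell(u))$ is injective and at least one of $r(u),\ell(u)$ has the same type as $u$ (possible since $c_1>1/2$). Then: (1) if $R_t=L_t=u$ is unmarked, mark $u$ with probability $a/p(u)$; (2) if $R_t=u$ is unmarked and $L_t$ is marked, with probability $a/p(L_t)$ mark $u$, and otherwise move the mark from $L_t$ to $u$ (so $L_t$ becomes unmarked and $u$ marked); (3) symmetrically if $L_t=u$ is unmarked and $R_t$ marked, with probability $a/p(R_t)$ mark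 $u$, otherwise move the mark from $R_t$ to $u$; (4) if $(R_t,L_t)=(r(u),\ell(u))$ for an unmarked $u$, mark $u$ with probability $\frac{a\,p(u)}{p(R_t)p(L_t)}$; otherwise do nothing. The scheme ends when all cards are marked; $T_k$ is the first time $k$ cards are marked. *)

theory Defs
  imports "HOL-Probability.Probability"
begin

text \<open>Cards are the natural numbers 0..<2n (N = 2n). Cards c < n are the a-cards,
  cards n \<le> c < 2n are the b-cards, with b = 2 - a.\<close>

definition cards :: "nat \<Rightarrow> nat set" where
  "cards n = {..<2*n}"

definition is_acard :: "nat \<Rightarrow> nat \<Rightarrow> bool" where
  "is_acard n c \<longleftrightarrow> c < n"

definition weight :: "real \<Rightarrow> nat \<Rightarrow> nat \<Rightarrow> real" where
  "weight a n c = (if is_acard n c then a else 2 - a)"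

definition card_pmf :: "real \<Rightarrow> nat \<Rightarrow> nat pmf" where
  "card_pmf a n = embed_pmf (\<lambda>c. if c < 2*n then weight a n c / real (2*n) else 0)"

definition valid_assignment :: "nat \<Rightarrow> nat set \<Rightarrow> (nat \<Rightarrow> nat \<times> nat) \<Rightarrow> bool" where
  "valid_assignment n M f \<longleftrightarrow>
     inj_on f (cards n - M) \<and>
     (\<forall>u \<in> cards n - M. fst (f u) \<in> M \<and> snd (f u) \<in> M \<and>
        (is_acard n (fst (f u)) = is_acard n u \<or> is_acard n (snd (f u)) = is_acard n u))"

definition mark_step_given ::
  "real \<Rightarrow> nat \<Rightarrow> real \<Rightarrow> (nat \<Rightarrow> nat \<times> nat) \<Rightarrow> nat set \<Rightarrow> nat \<Rightarrow> nat \<Rightarrow> nat set pmf" where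
  "mark_step_given a n c1 f M R L =
    (let p = weight a n; N = 2*n; k = card M in
     if k \<ge> N then return_pmf M
     else if real k < c1 * real N then
       (if R \<notin> M \<and> L \<notin> M then
          map_pmf (\<lambda>b. if b then insert R M else M) (bernoulli_pmf (a^2 / (p R * p L)))
        else return_pmf M)
     else
       (if R = L \<and> R \<notin> M then
          map_pmf (\<lambda>b. if b then insert R M else M) (bernoulli_pmf (a / p R))
        else if R \<notin> M \<and> L \<in> M then
          map_pmf (\<lambda>b. if b then insert R M else insert R (M - {L})) (bernoulli_pmf (a / p L))
        else if L \<notin> M \<and> R \<in> M then
          map_pmf (\<lambda>b. if b then insert L M else insert L (M - {R})) (bernoulli_pmf (a / p R))
        else if \<exists>u \<in> cards n - M. f u = (R, L) then
          (let u = (THE u. u \<in> cards n - M \<and> f u = (R, L)) in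
           map_pmf (\<lambda>b. if b then insert u M else M) (bernoulli_pmf (a * p u / (p R * p L))))
        else return_pmf M))"

definition mark_step ::
  "real \<Rightarrow> nat \<Rightarrow> real \<Rightarrow> (nat \<Rightarrow> nat \<times> nat) \<Rightarrow> nat set \<Rightarrow> nat set pmf" where
  "mark_step a n c1 f M =
     do { R \<leftarrow> card_pmf a n; L \<leftarrow> card_pmf a n; mark_step_given a n c1 f M R L }"

text \<open>Distribution of the marked set after t steps. The assignment may depend on
  the step index and the current marked set: asg t M is the assignment used at step t+1.\<close>
fun marked :: "real \<Rightarrow> nat \<Rightarrow> real \<Rightarrow> (nat \<Rightarrow> nat set \<Rightarrow> nat \<Rightarrow> nat \<times> nat) \<Rightarrow> nat \<Rightarrow> nat set pmf" where
  "marked a n c1 asg 0 = return_pmf {}"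
| "marked a n c1 asg (Suc t) = marked a n c1 asg t \<bind> (\<lambda>M. mark_step a n c1 (asg t M) M)"

text \<open>P(T_N > x): the scheme has not marked all N cards after floor x steps.\<close>
definition prob_TN_gt :: "real \<Rightarrow> nat \<Rightarrow> real \<Rightarrow> (nat \<Rightarrow> nat set \<Rightarrow> nat \<Rightarrow> nat \<times> nat) \<Rightarrow> real \<Rightarrow> real" where
  "prob_TN_gt a n c1 asg x =
     measure_pmf.prob (marked a n c1 asg (nat \<lfloor>x\<rfloor>)) {M. M \<noteq> cards n}"

end

theory Submission
  imports Defs
begin

text \<open>
  Put d = \<epsilon>/(4(1+\<epsilon>)) and c1 = 1 - d/2. The proof is a drift argument for a potential which
  equals N rho^(N-k) while only k < c1 N cards are marked, where rho = 1 + 16/(d^2 a^2 N), and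
  afterwards equals the number of unmarked a-cards plus d times the number of unmarked b-cards.
  In phase 1 at least d N/2 cards are unmarked, so a step marks a new card with probability at
  least (a d/2)^2. In phase 2 at least (1-d) n cards of each type are marked, and pairing an
  unmarked card with a marked one (rules (2) and (3)) removes its weight at rate at least
  a (1-d)^2/N. Either way the expected potential shrinks by the factor 1 - 2a(1-d)^2/N per step.
  It starts below N exp(16/(d^2 a^2)) and is at least d on every incomplete marking, so by Markov's
  inequality the probability of not having finished after (1+\<epsilon>) N log N/(2a) steps is
  O(N^(1 - (1-d)^2 (1+\<epsilon>))), and (1-d)^2 (1+\<epsilon>) > 1.
\<close>

section \<open>Expectation bounds for discrete distributions\<close>

lemma nn_integral_map_bernoulli_pmf:
  assumes "0 \<le> p" "p \<le> 1" "0 \<le> g A" "0 \<le> g B"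
  shows "(\<integral>\<^sup>+x. ennreal (g x) \<partial>map_pmf (\<lambda>b. if b then A else B) (bernoulli_pmf p))
    = ennreal (p * g A + (1 - p) * g B)"
  using assms by (simp add: ennreal_mult'' ennreal_plus[symmetric] mult.commute)

lemma nn_integral_pmf_le:
  assumes "\<And>x. x \<in> set_pmf P \<Longrightarrow> g x \<le> B"
  shows "(\<integral>\<^sup>+x. ennreal (g x) \<partial>P) \<le> ennreal B"
proof -
  have "(\<integral>\<^sup>+x. ennreal (g x) \<partial>P) \<le> (\<integral>\<^sup>+x. ennreal B \<partial>P)"
    by (intro nn_integral_mono_AE) (auto simp: AE_measure_pmf_iff assms ennreal_leI)
  then show ?thesis by (simp add: measure_pmf.emeasure_space_1)
qed

lemma nn_integral_iterated_bind_pmf_le: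
  fixes P :: "nat \<Rightarrow> 'a pmf" and V :: "'a \<Rightarrow> real"
  assumes P_Suc: "\<And>t. P (Suc t) = P t \<bind> K t"
    and P_0: "set_pmf (P 0) \<subseteq> S"
    and closed: "\<And>t x. x \<in> S \<Longrightarrow> set_pmf (K t x) \<subseteq> S"
    and drift: "\<And>t x. x \<in> S \<Longrightarrow> (\<integral>\<^sup>+y. ennreal (V y) \<partial>K t x) \<le> ennreal (g * V x)"
    and "0 \<le> g" and V_nonneg: "\<And>x. 0 \<le> V x"
  shows "set_pmf (P t) \<subseteq> S"
    and "(\<integral>\<^sup>+y. ennreal (V y) \<partial>P t) \<le> ennreal (g ^ t) * (\<integral>\<^sup>+y. ennreal (V y) \<partial>P 0)"
proof -
  show support: "set_pmf (P t) \<subseteq> S" for t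
  proof (induction t)
    case (Suc t)
    then show ?case using closed by (fastforce simp: P_Suc)
  qed (use P_0 in simp)
  show "(\<integral>\<^sup>+y. ennreal (V y) \<partial>P t) \<le> ennreal (g ^ t) * (\<integral>\<^sup>+y. ennreal (V y) \<partial>P 0)"
  proof (induction t)
    case (Suc t)
    have "(\<integral>\<^sup>+y. ennreal (V y) \<partial>P (Suc t))
        = (\<integral>\<^sup>+x. (\<integral>\<^sup>+y. ennreal (V y) \<partial>K t x) \<partial>P t)"
      by (simp add: P_Suc)
    also have "\<dots> \<le> (\<integral>\<^sup>+x. ennreal g * ennreal (V x) \<partial>P t)"
      using support drift \<open>0 \<le> g\<close> V_nonneg
      by (intro nn_integral_mono_AE) (auto simp: AE_measure_pmf_iff ennreal_mult)
    also have "\<dots> = ennreal g * (\<integral>\<^sup>+x. ennreal (V x) \<partial>P t)"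
      by (rule nn_integral_cmult) simp
    also have "\<dots> \<le> ennreal g * (ennreal (g ^ t) * (\<integral>\<^sup>+y. ennreal (V y) \<partial>P 0))"
      by (rule mult_left_mono[OF Suc.IH]) simp
    finally show ?case
      using \<open>0 \<le> g\<close> by (simp add: ennreal_mult mult.assoc)
  qed simp
qed

lemma measure_pmf_prob_le_nn_integral:
  fixes V :: "'a \<Rightarrow> real"
  assumes "0 < d" "0 \<le> B" and V_nonneg: "\<And>x. 0 \<le> V x"
    and above: "\<And>x. x \<in> set_pmf P \<Longrightarrow> x \<in> A \<Longrightarrow> d \<le> V x"
    and bound: "(\<integral>\<^sup>+x. ennreal (V x) \<partial>P) \<le> ennreal B"
  shows "measure_pmf.prob P A \<le> B / d"
proof -
  have "emeasure P A = (\<integral>\<^sup>+x. indicator A x \<partial>P)"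
    by simp
  also have "\<dots> \<le> (\<integral>\<^sup>+x. ennreal (V x) * ennreal (1 / d) \<partial>P)"
  proof (intro nn_integral_mono_AE, unfold AE_measure_pmf_iff, intro ballI)
    fix x assume "x \<in> set_pmf P"
    then have "indicator A x \<le> ennreal (V x / d)"
      using above[of x] \<open>0 < d\<close> by (auto simp: indicator_def le_divide_eq)
    then show "indicator A x \<le> ennreal (V x) * ennreal (1 / d)"
      using \<open>0 < d\<close> by (simp add: ennreal_mult''[symmetric])
  qed
  also have "\<dots> = (\<integral>\<^sup>+x. ennreal (V x) \<partial>P) * ennreal (1 / d)"
    by (rule nn_integral_multc) simp
  also have "\<dots> \<le> ennreal (B / d)"
    using mult_right_mono[OF bound, of "ennreal (1 / d)"] \<open>0 < d\<close>
    by (simp add: ennreal_mult''[symmetric])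
  finally show ?thesis
    using \<open>0 \<le> B\<close> \<open>0 < d\<close> by (simp add: measure_pmf.emeasure_eq_measure ennreal_le_iff)
qed

section \<open>The card distribution\<close>

lemma finite_cards [simp]: "finite (cards n)"
  by (simp add: cards_def)

lemma card_cards [simp]: "card (cards n) = 2*n"
  by (simp add: cards_def)

definition card_prob :: "real \<Rightarrow> nat \<Rightarrow> nat \<Rightarrow> real" where
  "card_prob a n c = weight a n c / real (2*n)"

lemma weight_ge: "a \<le> 1 \<Longrightarrow> a \<le> weight a n c"
  by (simp add: weight_def)

lemma weight_pos: "0 < a \<Longrightarrow> a \<le> 1 \<Longrightarrow> 0 < weight a n c"
  by (simp add: weight_def)

lemma coin_prob_le_1: "0 < a \<Longrightarrow> a \<le> 1 \<Longrightarrow> a / weight a n c \<le> 1"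
  using weight_ge weight_pos by (simp add: divide_le_eq_1)

lemma coin_prob2_le_1:
  assumes "0 < a" "a \<le> 1"
  shows "a^2 / (weight a n R * weight a n L) \<le> 1"
proof -
  have "a * a \<le> weight a n R * weight a n L"
    using assms less_imp_le[OF weight_pos[OF assms]] by (intro mult_mono weight_ge) auto
  then show ?thesis
    using weight_pos[OF assms] by (simp add: power2_eq_square)
qed

lemma sum_weight: "(\<Sum>c<2*n. weight a n c) = real (2*n)"
proof -
  have "{..<2*n} = {..<n} \<union> {n..<2*n}" by auto
  then have "(\<Sum>c<2*n. weight a n c) = (\<Sum>c<n. weight a n c) + (\<Sum>c\<in>{n..<2*n}. weight a n c)"
    using sum.union_disjoint[of "{..<n}" "{n..<2*n}"]
    by (metis finite_lessThan finite_atLeastLessThan ivl_disj_int_one(2))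
  also have "\<dots> = (\<Sum>c<n. a) + (\<Sum>c\<in>{n..<2*n}. 2 - a)"
    by (intro arg_cong2[where f = "(+)"] sum.cong) (auto simp: weight_def is_acard_def)
  finally show ?thesis by (simp add: algebra_simps)
qed

lemma sum_card_prob: "0 < n \<Longrightarrow> (\<Sum>c<2*n. card_prob a n c) = 1"
  by (simp add: card_prob_def sum_divide_distrib[symmetric] sum_weight)

lemma card_prob_nonneg: "0 < a \<Longrightarrow> a \<le> 1 \<Longrightarrow> 0 \<le> card_prob a n c"
  by (simp add: card_prob_def weight_def)

lemma card_prob_mult_coin_prob:
  "0 < a \<Longrightarrow> a \<le> 1 \<Longrightarrow> card_prob a n c * (a / weight a n c) = a / real (2*n)"
  using weight_pos[of a n c] by (simp add: card_prob_def)

lemma pmf_card_pmf: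
  assumes "0 < a" "a \<le> 1" "0 < n"
  shows "pmf (card_pmf a n) c = (if c < 2*n then card_prob a n c else 0)"
proof -
  let ?f = "\<lambda>c. if c < 2*n then card_prob a n c else 0"
  have nonneg: "0 \<le> ?f c" for c
    using card_prob_nonneg[OF assms(1,2)] by simp
  have "(\<integral>\<^sup>+x. ennreal (?f x) \<partial>count_space UNIV) = (\<Sum>x<2*n. ennreal (?f x))"
    by (rule nn_integral_count_space') auto
  also have "\<dots> = ennreal (\<Sum>x<2*n. card_prob a n x)"
    using card_prob_nonneg[OF assms(1,2)] by (simp add: sum_ennreal)
  finally have "(\<integral>\<^sup>+x. ennreal (?f x) \<partial>count_space UNIV) = 1"
    using sum_card_prob[OF assms(3)] by simp
  then have "pmf (embed_pmf ?f) c = ?f c"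
    by (rule pmf_embed_pmf[OF nonneg])
  moreover have "card_pmf a n = embed_pmf ?f"
    unfolding card_pmf_def card_prob_def ..
  ultimately show ?thesis by simp
qed

lemma set_pmf_card_pmf: "0 < a \<Longrightarrow> a \<le> 1 \<Longrightarrow> 0 < n \<Longrightarrow> set_pmf (card_pmf a n) \<subseteq> {..<2*n}"
  using pmf_card_pmf by (auto simp: set_pmf_iff split: if_splits)

lemma nn_integral_card_pmf:
  assumes "0 < a" "a \<le> 1" "0 < n"
  shows "(\<integral>\<^sup>+x. g x \<partial>card_pmf a n) = (\<Sum>c<2*n. g c * ennreal (card_prob a n c))"
  using set_pmf_card_pmf[OF assms]
  by (subst nn_integral_measure_pmf_support[of "{..<2*n}"]) (auto simp: pmf_card_pmf[OF assms])

lemma nn_integral_mark_step_le: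
  assumes "0 < a" "a \<le> 1" "0 < n"
    and given: "\<And>R L. R < 2*n \<Longrightarrow> L < 2*n \<Longrightarrow>
      (\<integral>\<^sup>+x. g x \<partial>mark_step_given a n c1 f M R L) \<le> ennreal (H R L)"
    and H_nonneg: "\<And>R L. R < 2*n \<Longrightarrow> L < 2*n \<Longrightarrow> 0 \<le> H R L"
  shows "(\<integral>\<^sup>+x. g x \<partial>mark_step a n c1 f M)
    \<le> ennreal (\<Sum>R<2*n. \<Sum>L<2*n. card_prob a n R * card_prob a n L * H R L)"
proof -
  let ?p = "card_prob a n"
  have p: "0 \<le> ?p c" for c
    using card_prob_nonneg[OF assms(1,2)] .
  have "(\<integral>\<^sup>+x. g x \<partial>mark_step a n c1 f M)
      = (\<Sum>R<2*n. \<Sum>L<2*n. (\<integral>\<^sup>+x. g x \<partial>mark_step_given a n c1 f M R L) * ennreal (?p L) * ennreal (?p R))"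
    unfolding mark_step_def by (simp add: nn_integral_card_pmf[OF assms(1-3)] sum_distrib_right)
  also have "\<dots> \<le> (\<Sum>R<2*n. \<Sum>L<2*n. ennreal (H R L) * ennreal (?p L) * ennreal (?p R))"
    using given by (intro sum_mono mult_right_mono) auto
  also have "\<dots> = (\<Sum>R<2*n. \<Sum>L<2*n. ennreal (?p R * ?p L * H R L))"
    using p H_nonneg by (simp add: ennreal_mult'' mult_ac)
  also have "\<dots> = ennreal (\<Sum>R<2*n. \<Sum>L<2*n. ?p R * ?p L * H R L)"
    using p H_nonneg by (subst sum_ennreal[symmetric]) (auto intro!: sum.cong sum_ennreal sum_nonneg)
  finally show ?thesis .
qed

section \<open>Potentials\<close>

definition phase2_weight :: "nat \<Rightarrow> real \<Rightarrow> nat \<Rightarrow> real" where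
  "phase2_weight n lam c = (if is_acard n c then 1 else lam)"

definition phase2_potential :: "nat \<Rightarrow> real \<Rightarrow> nat set \<Rightarrow> real" where
  "phase2_potential n lam M = (\<Sum>c\<in>cards n - M. phase2_weight n lam c)"

definition phase1_potential :: "nat \<Rightarrow> real \<Rightarrow> nat \<Rightarrow> real" where
  "phase1_potential n rho k = real (2*n) * rho ^ (2*n - k)"

text \<open>The phase-1 value is at least N, which bounds the phase-2 value, so the potential cannot
  increase when the scheme switches phase.\<close>

definition potential :: "nat \<Rightarrow> real \<Rightarrow> real \<Rightarrow> real \<Rightarrow> nat set \<Rightarrow> real" where
  "potential n c1 lam rho M =
     (if real (card M) < c1 * real (2*n) then phase1_potential n rho (card M)
      else phase2_potential n lam M)"

lemma phase2_weight_nonneg: "0 \<le> lam \<Longrightarrow> 0 \<le> phase2_weight n lam c"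
  by (simp add: phase2_weight_def)

lemma phase2_potential_nonneg: "0 \<le> lam \<Longrightarrow> 0 \<le> phase2_potential n lam M"
  unfolding phase2_potential_def by (intro sum_nonneg phase2_weight_nonneg)

lemma phase2_weight_le_potential:
  "0 \<le> lam \<Longrightarrow> c \<in> cards n - M \<Longrightarrow> phase2_weight n lam c \<le> phase2_potential n lam M"
  unfolding phase2_potential_def by (intro member_le_sum phase2_weight_nonneg) auto

lemma phase2_potential_le: "lam \<le> 1 \<Longrightarrow> phase2_potential n lam M \<le> real (2*n)"
proof -
  assume "lam \<le> 1"
  then have "phase2_potential n lam M \<le> (\<Sum>c\<in>cards n - M. 1)"
    unfolding phase2_potential_def by (intro sum_mono) (simp add: phase2_weight_def)
  also have "\<dots> \<le> real (card (cards n))"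
    using card_mono[of "cards n" "cards n - M"] by auto
  finally show ?thesis by simp
qed

lemma phase2_potential_insert:
  "c \<in> cards n \<Longrightarrow> c \<notin> M \<Longrightarrow> phase2_potential n lam (insert c M) = phase2_potential n lam M - phase2_weight n lam c"
proof -
  assume "c \<in> cards n" "c \<notin> M"
  moreover have "cards n - insert c M = (cards n - M) - {c}"
    by auto
  ultimately show ?thesis
    unfolding phase2_potential_def by (simp add: sum_diff1)
qed

lemma phase2_potential_insert_le: "0 \<le> lam \<Longrightarrow> phase2_potential n lam (insert c M) \<le> phase2_potential n lam M"
  unfolding phase2_potential_def by (intro sum_mono2 phase2_weight_nonneg) auto

lemma phase2_potential_move:
  assumes "M \<subseteq> cards n" "u \<in> cards n" "u \<notin> M" "v \<in> M"
  shows "phase2_potential n lam (insert u (M - {v}))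
    = phase2_potential n lam M - phase2_weight n lam u + phase2_weight n lam v"
proof -
  have "cards n - insert u (M - {v}) = insert v (cards n - M - {u})"
    using assms by auto
  moreover have "v \<notin> cards n - M - {u}"
    using assms by auto
  ultimately have "phase2_potential n lam (insert u (M - {v}))
      = phase2_weight n lam v + (\<Sum>c\<in>cards n - M - {u}. phase2_weight n lam c)"
    unfolding phase2_potential_def by simp
  also have "(\<Sum>c\<in>cards n - M - {u}. phase2_weight n lam c) = phase2_potential n lam M - phase2_weight n lam u"
    unfolding phase2_potential_def using assms by (simp add: sum_diff1)
  finally show ?thesis by simp
qed

lemma phase2_potential_ge:
  assumes "M \<subseteq> cards n" "M \<noteq> cards n" "0 \<le> lam" "lam \<le> 1"
  shows "lam \<le> phase2_potential n lam M"
proof -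
  obtain c where "c \<in> cards n - M"
    using assms(1,2) by auto
  then have "phase2_weight n lam c \<le> phase2_potential n lam M"
    by (rule phase2_weight_le_potential[OF assms(3)])
  moreover have "lam \<le> phase2_weight n lam c"
    using assms(4) by (simp add: phase2_weight_def)
  ultimately show ?thesis by linarith
qed

lemma phase1_potential_Suc: "k < 2*n \<Longrightarrow> phase1_potential n rho k = rho * phase1_potential n rho (Suc k)"
proof -
  assume "k < 2*n"
  then have "2*n - k = Suc (2*n - Suc k)"
    by simp
  then show ?thesis
    by (simp add: phase1_potential_def)
qed

lemma phase1_potential_ge: "1 \<le> rho \<Longrightarrow> real (2*n) \<le> phase1_potential n rho k"
  unfolding phase1_potential_def using mult_left_mono[OF one_le_power[of rho "2*n - k"]] by simp

lemma potential_phase2: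
  "c1 * real (2*n) \<le> real (card M) \<Longrightarrow> potential n c1 lam rho M = phase2_potential n lam M"
  by (simp add: potential_def)

lemma potential_nonneg: "0 \<le> lam \<Longrightarrow> 1 \<le> rho \<Longrightarrow> 0 \<le> potential n c1 lam rho M"
  using phase1_potential_ge[of rho n "card M"] phase2_potential_nonneg[of lam n M]
  unfolding potential_def by (smt (verit) of_nat_0_le_iff)

lemma potential_le_phase1_potential:
  "lam \<le> 1 \<Longrightarrow> 1 \<le> rho \<Longrightarrow> potential n c1 lam rho M \<le> phase1_potential n rho (card M)"
  using phase2_potential_le[of lam n M] phase1_potential_ge[of rho n "card M"]
  unfolding potential_def by auto

lemma potential_ge:
  assumes "M \<subseteq> cards n" "M \<noteq> cards n" "0 \<le> lam" "lam \<le> 1" "1 \<le> rho"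
  shows "lam \<le> potential n c1 lam rho M"
proof -
  have "M \<subset> cards n"
    using assms(1,2) by blast
  then have "1 \<le> real (2*n)"
    using psubset_card_mono[of "cards n" M] by simp
  then show ?thesis
    using phase2_potential_ge[OF assms(1-4)] phase1_potential_ge[OF assms(5), of n "card M"] assms(4)
    unfolding potential_def by auto
qed

section \<open>One step of the marking scheme\<close>

lemma nn_integral_mark_step_given_phase1:
  assumes "0 < a" "a \<le> 1" "0 \<le> lam" "lam \<le> 1" "1 \<le> rho" "c1 \<le> 1" "finite M"
    and phase1: "real (card M) < c1 * real (2*n)"
  shows "(\<integral>\<^sup>+x. ennreal (potential n c1 lam rho x) \<partial>mark_step_given a n c1 f M R L)
    \<le> ennreal (phase1_potential n rho (card M)
         - (if R \<notin> M \<and> L \<notin> M then a^2 / (weight a n R * weight a n L) else 0)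
           * (phase1_potential n rho (card M) - phase1_potential n rho (Suc (card M))))"
proof -
  let ?P = "phase1_potential n rho"
  have "real (card M) < real (2*n)"
    using phase1 mult_right_mono[OF \<open>c1 \<le> 1\<close>, of "real (2*n)"] by simp
  then have not_full: "\<not> 2*n \<le> card M"
    by linarith
  have P_M: "potential n c1 lam rho M = ?P (card M)"
    using phase1 by (simp add: potential_def)
  show ?thesis
  proof (cases "R \<notin> M \<and> L \<notin> M")
    case True
    let ?q = "a^2 / (weight a n R * weight a n L)"
    have q: "0 \<le> ?q" "?q \<le> 1"
      using coin_prob2_le_1[OF assms(1,2)] weight_pos[OF assms(1,2), of n R] weight_pos[OF assms(1,2), of n L]
      by auto
    have "mark_step_given a n c1 f M R L = map_pmf (\<lambda>b. if b then insert R M else M) (bernoulli_pmf ?q)"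
      using True phase1 not_full by (simp add: mark_step_given_def Let_def)
    then have "(\<integral>\<^sup>+x. ennreal (potential n c1 lam rho x) \<partial>mark_step_given a n c1 f M R L)
        = ennreal (?q * potential n c1 lam rho (insert R M) + (1 - ?q) * potential n c1 lam rho M)"
      using q assms by (simp only:) (rule nn_integral_map_bernoulli_pmf; simp add: potential_nonneg)
    also have "\<dots> = ennreal (?q * potential n c1 lam rho (insert R M) + (1 - ?q) * ?P (card M))"
      by (simp only: P_M)
    also have "\<dots> \<le> ennreal (?P (card M) - ?q * (?P (card M) - ?P (Suc (card M))))"
    proof (rule ennreal_leI)
      have "potential n c1 lam rho (insert R M) \<le> ?P (Suc (card M))"
        using potential_le_phase1_potential[OF assms(4,5)] True \<open>finite M\<close> by (metis card_insert_disjoint)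
      then have "?q * potential n c1 lam rho (insert R M) \<le> ?q * ?P (Suc (card M))"
        by (rule mult_left_mono[OF _ q(1)])
      then show "?q * potential n c1 lam rho (insert R M) + (1 - ?q) * ?P (card M)
          \<le> ?P (card M) - ?q * (?P (card M) - ?P (Suc (card M)))"
        by (simp only: left_diff_distrib right_diff_distrib mult_1_left)
    qed
    finally show ?thesis
      using True by simp
  next
    case False
    then have "mark_step_given a n c1 f M R L = return_pmf M"
      using phase1 not_full by (auto simp: mark_step_given_def Let_def)
    then show ?thesis
      using False P_M by auto
  qed
qed

text \<open>Expected decrease of the phase-2 potential in a step that pairs the unmarked card u with the
  marked card v: u always becomes marked, and with probability 1 - a/p(v) the mark leaves v.\<close>

definition move_drop :: "real \<Rightarrow> nat \<Rightarrow> real \<Rightarrow> nat \<Rightarrow> nat \<Rightarrow> real" where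
  "move_drop a n lam u v = phase2_weight n lam u - (1 - a / weight a n v) * phase2_weight n lam v"

lemma move_drop_le:
  "0 < a \<Longrightarrow> a \<le> 1 \<Longrightarrow> 0 \<le> lam \<Longrightarrow> move_drop a n lam u v \<le> phase2_weight n lam u"
  unfolding move_drop_def using coin_prob_le_1[of a n v] phase2_weight_nonneg[of lam n v] by simp

lemma nn_integral_move_step:
  assumes "0 < a" "a \<le> 1" "0 \<le> lam" "M \<subseteq> cards n" "u \<in> cards n" "u \<notin> M" "v \<in> M"
    and phase2: "c1 * real (2*n) \<le> real (card M)"
  shows "(\<integral>\<^sup>+x. ennreal (potential n c1 lam rho x)
      \<partial>map_pmf (\<lambda>b. if b then insert u M else insert u (M - {v})) (bernoulli_pmf (a / weight a n v)))
    = ennreal (phase2_potential n lam M - move_drop a n lam u v)"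
proof -
  let ?Phi = "phase2_potential n lam M" and ?w = "phase2_weight n lam" and ?p = "a / weight a n v"
  have "finite M"
    using assms(4) by (rule finite_subset) simp
  then have "card (insert u (M - {v})) = Suc (card (M - {v}))"
    using assms(6) by simp
  also have "\<dots> = card M"
    using \<open>finite M\<close> assms(7) by (rule card_Suc_Diff1)
  finally have move: "potential n c1 lam rho (insert u (M - {v})) = ?Phi - ?w u + ?w v"
    using phase2 phase2_potential_move[OF assms(4-7)] by (simp add: potential_phase2)
  have "card M \<le> card (insert u M)"
    by (rule card_insert_le)
  then have mark: "potential n c1 lam rho (insert u M) = ?Phi - ?w u"
    using phase2 phase2_potential_insert[OF assms(5,6)] by (simp add: potential_phase2)
  have nonneg: "0 \<le> ?Phi - ?w u" "0 \<le> ?w v"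
    using phase2_weight_le_potential[OF assms(3), of u n M] assms(3,5,6) by (auto simp: phase2_weight_nonneg)
  have p: "0 \<le> ?p" "?p \<le> 1"
    using coin_prob_le_1[OF assms(1,2)] weight_pos[OF assms(1,2), of n v] assms(1) by auto
  have "(\<integral>\<^sup>+x. ennreal (potential n c1 lam rho x)
      \<partial>map_pmf (\<lambda>b. if b then insert u M else insert u (M - {v})) (bernoulli_pmf ?p))
    = ennreal (?p * potential n c1 lam rho (insert u M) + (1 - ?p) * potential n c1 lam rho (insert u (M - {v})))"
    using p nonneg by (intro nn_integral_map_bernoulli_pmf) (simp_all add: mark move)
  also have "?p * potential n c1 lam rho (insert u M) + (1 - ?p) * potential n c1 lam rho (insert u (M - {v}))
      = ?Phi - move_drop a n lam u v"
    unfolding mark move move_drop_def by (simp add: algebra_simps)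
  finally show ?thesis .
qed

lemma nn_integral_mark_step_given_phase2:
  assumes "0 < a" "a \<le> 1" "0 \<le> lam" "M \<subseteq> cards n"
    and phase2: "c1 * real (2*n) \<le> real (card M)" and "card M < 2*n" and "R < 2*n" "L < 2*n"
  shows "(\<integral>\<^sup>+x. ennreal (potential n c1 lam rho x) \<partial>mark_step_given a n c1 f M R L)
    \<le> ennreal (phase2_potential n lam M
         - (if R \<notin> M \<and> L \<in> M then move_drop a n lam R L
            else if R \<in> M \<and> L \<notin> M then move_drop a n lam L R else 0))"
proof -
  have not_phase1: "\<not> real (card M) < c1 * real (2*n)" "\<not> 2*n \<le> card M"
    using assms(5,6) by auto
  have RL: "R \<in> cards n" "L \<in> cards n"
    using assms(7,8) by (auto simp: cards_def)
  consider "R \<notin> M \<and> L \<in> M" | "R \<in> M \<and> L \<notin> M" | "\<not> (R \<notin> M \<and> L \<in> M)" "\<not> (R \<in> M \<and> L \<notin> M)"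
    by blast
  then show ?thesis
  proof cases
    case 1
    then have "mark_step_given a n c1 f M R L
        = map_pmf (\<lambda>b. if b then insert R M else insert R (M - {L})) (bernoulli_pmf (a / weight a n L))"
      using not_phase1 by (auto simp: mark_step_given_def Let_def)
    then show ?thesis
      using 1 RL assms nn_integral_move_step by simp
  next
    case 2
    then have "mark_step_given a n c1 f M R L
        = map_pmf (\<lambda>b. if b then insert L M else insert L (M - {R})) (bernoulli_pmf (a / weight a n R))"
      using not_phase1 by (auto simp: mark_step_given_def Let_def)
    then show ?thesis
      using 2 RL assms nn_integral_move_step by simp
  next
    case 3
    then have "set_pmf (mark_step_given a n c1 f M R L) \<subseteq> insert M (range (\<lambda>y. insert y M))"
      using not_phase1 by (auto simp: mark_step_given_def Let_def split: if_splits)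
    moreover have "potential n c1 lam rho (insert y M) \<le> phase2_potential n lam M" for y
      using phase2 card_insert_le[of M y] phase2_potential_insert_le[OF assms(3)]
      by (subst potential_phase2) (auto intro: order_trans)
    ultimately show ?thesis
      using 3 phase2 by (auto intro!: nn_integral_pmf_le simp: potential_phase2)
  qed
qed

lemma sum_lessThan_if_mem:
  "A \<subseteq> cards n \<Longrightarrow> (\<Sum>c<2*n. if c \<in> A then f c else 0) = (\<Sum>c\<in>A. f c)"
  using sum.inter_restrict[of "{..<2*n}" f A] by (simp add: cards_def Int_absorb1)

lemma phase1_average:
  assumes "0 < a" "a \<le> 1" "0 < n" "M \<subseteq> cards n"
  shows "(\<Sum>R<2*n. \<Sum>L<2*n. card_prob a n R * card_prob a n L
      * (P - (if R \<notin> M \<and> L \<notin> M then a^2 / (weight a n R * weight a n L) else 0) * D))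
    = P - (a * real (card (cards n - M)) / real (2*n))^2 * D"
proof -
  let ?p = "card_prob a n"
  define e where "e c = (if c \<in> cards n - M then a / real (2*n) else 0)" for c
  have pointwise: "?p R * ?p L * (P - (if R \<notin> M \<and> L \<notin> M then a^2 / (weight a n R * weight a n L) else 0) * D)
      = P * ?p R * ?p L - D * (e R * e L)" if "R < 2*n" "L < 2*n" for R L
  proof (cases "R \<notin> M \<and> L \<notin> M")
    case True
    have "?p R * ?p L * (a^2 / (weight a n R * weight a n L))
        = (?p R * (a / weight a n R)) * (?p L * (a / weight a n L))"
      by (simp add: power2_eq_square)
    also have "\<dots> = e R * e L"
      unfolding card_prob_mult_coin_prob[OF assms(1,2)] using True that by (simp add: e_def cards_def)
    finally have coin: "?p R * ?p L * (a^2 / (weight a n R * weight a n L)) = e R * e L" .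
    have "?p R * ?p L * (P - a^2 / (weight a n R * weight a n L) * D) = P * ?p R * ?p L - D * (e R * e L)"
      by (simp only: coin[symmetric]) (simp add: algebra_simps)
    then show ?thesis
      using True by simp
  qed (auto simp: e_def)
  have sum_e: "(\<Sum>c<2*n. e c) = a * real (card (cards n - M)) / real (2*n)"
    unfolding e_def by (subst sum_lessThan_if_mem) auto
  have "(\<Sum>R<2*n. \<Sum>L<2*n. ?p R * ?p L
      * (P - (if R \<notin> M \<and> L \<notin> M then a^2 / (weight a n R * weight a n L) else 0) * D))
    = (\<Sum>R<2*n. \<Sum>L<2*n. P * ?p R * ?p L - D * e R * e L)"
    by (intro sum.cong refl) (simp add: pointwise)
  also have "\<dots> = (\<Sum>R<2*n. P * ?p R) * (\<Sum>L<2*n. ?p L) - (\<Sum>R<2*n. D * e R) * (\<Sum>L<2*n. e L)"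
    by (simp only: sum_subtractf sum_product mult.assoc)
  finally show ?thesis
    using sum_card_prob[OF assms(3)] sum_e by (simp add: sum_distrib_left[symmetric] power2_eq_square)
qed

lemma phase2_average:
  assumes "0 < n" "M \<subseteq> cards n"
  shows "(\<Sum>R<2*n. \<Sum>L<2*n. card_prob a n R * card_prob a n L
      * (P - (if R \<notin> M \<and> L \<in> M then h R L else if R \<in> M \<and> L \<notin> M then h L R else 0)))
    = P - 2 * (\<Sum>u\<in>cards n - M. \<Sum>v\<in>M. card_prob a n u * card_prob a n v * h u v)"
proof -
  let ?p = "card_prob a n"
  define S where "S = (\<Sum>u\<in>cards n - M. \<Sum>v\<in>M. ?p u * ?p v * h u v)"
  define g where "g R L = (if R \<in> cards n - M then if L \<in> M then ?p R * ?p L * h R L else 0 else 0)"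
    for R L
  have pointwise: "?p R * ?p L * (P - (if R \<notin> M \<and> L \<in> M then h R L else if R \<in> M \<and> L \<notin> M then h L R else 0))
      = P * ?p R * ?p L - g R L - g L R" if "R < 2*n" "L < 2*n" for R L
    using that by (auto simp: g_def cards_def algebra_simps)
  have "(\<Sum>R<2*n. \<Sum>L<2*n. g R L) = (\<Sum>R<2*n. if R \<in> cards n - M then \<Sum>v\<in>M. ?p R * ?p v * h R v else 0)"
    using assms(2) by (intro sum.cong refl) (auto simp: g_def sum_lessThan_if_mem)
  also have "\<dots> = S"
    unfolding S_def by (rule sum_lessThan_if_mem) auto
  finally have g: "(\<Sum>R<2*n. \<Sum>L<2*n. g R L) = S" .
  then have g_swap: "(\<Sum>R<2*n. \<Sum>L<2*n. g L R) = S"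
    by (subst sum.swap)
  have "(\<Sum>R<2*n. \<Sum>L<2*n. ?p R * ?p L
      * (P - (if R \<notin> M \<and> L \<in> M then h R L else if R \<in> M \<and> L \<notin> M then h L R else 0)))
    = (\<Sum>R<2*n. \<Sum>L<2*n. P * ?p R * ?p L - g R L - g L R)"
    by (intro sum.cong refl) (simp add: pointwise)
  also have "\<dots> = (\<Sum>R<2*n. P * ?p R) * (\<Sum>L<2*n. ?p L) - 2 * S"
    using g g_swap by (simp only: sum_subtractf sum_product mult.assoc)
  finally show ?thesis
    using sum_card_prob[OF assms(1)] by (simp add: sum_distrib_left[symmetric] S_def)
qed

lemma sum_by_card_type:
  fixes \<alpha> \<beta> :: real
  assumes "finite M"
  shows "(\<Sum>v\<in>M. if is_acard n v then \<alpha> else \<beta>)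
    = real (card (M \<inter> {..<n})) * \<alpha> + real (card (M - {..<n})) * \<beta>"
proof -
  have "(\<Sum>v\<in>M. if is_acard n v then \<alpha> else \<beta>)
      = (\<Sum>v\<in>M \<inter> {..<n}. if is_acard n v then \<alpha> else \<beta>) + (\<Sum>v\<in>M - {..<n}. if is_acard n v then \<alpha> else \<beta>)"
    using assms by (rule sum.Int_Diff)
  also have "\<dots> = (\<Sum>v\<in>M \<inter> {..<n}. \<alpha>) + (\<Sum>v\<in>M - {..<n}. \<beta>)"
    by (intro arg_cong2[where f = "(+)"] sum.cong) (auto simp: is_acard_def)
  finally show ?thesis
    by simp
qed

lemma card_marked_of_each_type_ge:
  assumes "M \<subseteq> cards n" "(1 - d/2) * real (2*n) \<le> real (card M)"
  shows "(1 - d) * real n \<le> real (card (M \<inter> {..<n}))"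
    and "(1 - d) * real n \<le> real (card (M - {..<n}))"
proof -
  have "finite M"
    using assms(1) by (rule finite_subset) simp
  then have "card M = card (M \<inter> {..<n}) + card (M - {..<n})"
    by (rule card_Int_Diff)
  moreover have "card (M \<inter> {..<n}) \<le> n"
    using card_mono[of "{..<n}" "M \<inter> {..<n}"] by auto
  moreover have "M - {..<n} \<subseteq> {n..<2*n}"
    using assms(1) by (auto simp: cards_def)
  then have "card (M - {..<n}) \<le> n"
    using card_mono[of "{n..<2*n}" "M - {..<n}"] by simp
  ultimately show "(1 - d) * real n \<le> real (card (M \<inter> {..<n}))"
    and "(1 - d) * real n \<le> real (card (M - {..<n}))"
    using assms(2) by (simp_all add: algebra_simps)
qed

lemma card_prob_mult_move_drop:
  assumes "0 < a" "a \<le> 1" "0 < n"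
  shows "card_prob a n u * card_prob a n v * move_drop a n d u v
    = card_prob a n u / real (2*n) * (if is_acard n v then a * phase2_weight n d u
        else (2 - a) * phase2_weight n d u - (2 - 2*a) * d)"
proof (cases "is_acard n v")
  case True
  then show ?thesis
    using assms(1) by (simp add: move_drop_def card_prob_def weight_def phase2_weight_def)
next
  case False
  define r where "r = 1 - a / (2 - a)"
  have "2 - a \<noteq> 0"
    using assms(2) by simp
  have v: "card_prob a n v = (2 - a) / real (2*n)" "move_drop a n d u v = phase2_weight n d u - r * d"
    using False by (simp_all add: card_prob_def move_drop_def weight_def phase2_weight_def r_def)
  have "card_prob a n u * card_prob a n v * move_drop a n d u v
      = card_prob a n u / real (2*n) * ((2 - a) * phase2_weight n d u - (2 - a) * r * d)"
    unfolding v using assms(3) by (simp add: field_simps)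
  also have "(2 - a) * r = 2 - 2*a"
    using \<open>2 - a \<noteq> 0\<close> by (simp add: r_def field_simps)
  finally show ?thesis
    using False by simp
qed

lemma sum_move_drop_eq:
  assumes "0 < a" "a \<le> 1" "0 < n" "finite M"
  shows "(\<Sum>v\<in>M. card_prob a n u * card_prob a n v * move_drop a n d u v)
    = card_prob a n u / real (2*n) * (real (card (M \<inter> {..<n})) * (a * phase2_weight n d u)
        + real (card (M - {..<n})) * ((2 - a) * phase2_weight n d u - (2 - 2*a) * d))"
proof -
  let ?w = "phase2_weight n d u"
  have "(\<Sum>v\<in>M. card_prob a n u * card_prob a n v * move_drop a n d u v)
      = (\<Sum>v\<in>M. card_prob a n u / real (2*n) * (if is_acard n v then a * ?w else (2 - a) * ?w - (2 - 2*a) * d))"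
    by (intro sum.cong refl card_prob_mult_move_drop[OF assms(1-3)])
  also have "\<dots> = card_prob a n u / real (2*n) * (\<Sum>v\<in>M. if is_acard n v then a * ?w else (2 - a) * ?w - (2 - 2*a) * d)"
    by (rule sum_distrib_left[symmetric])
  finally show ?thesis
    unfolding sum_by_card_type[OF assms(4)] .
qed

lemma acard_move_rate_ge:
  fixes m x y :: real
  assumes "0 < a" "a \<le> 1" "0 < d" "d \<le> 1/4" "0 \<le> m"
    and x: "(1 - d) * m \<le> x" and y: "(1 - d) * m \<le> y"
  shows "(1-d)^2 * (2 * m) \<le> a * x + (2 - a - (2 - 2*a) * d) * y"
proof -
  let ?c = "2 - a - (2 - 2*a) * d"
  have "(2 - 2*a) * d \<le> 2 * d"
    using assms(1,3) by (simp add: algebra_simps)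
  then have c: "0 \<le> ?c"
    using assms(2,4) by linarith
  have "(1-d)^2 * (2 * m) = (2 - 2*d) * ((1 - d) * m)"
    by (simp add: power2_eq_square algebra_simps)
  also have "\<dots> \<le> (a + ?c) * ((1 - d) * m)"
    using \<open>(2 - 2*a) * d \<le> 2 * d\<close> assms(4,5) by (intro mult_right_mono) auto
  also have "\<dots> = a * ((1 - d) * m) + ?c * ((1 - d) * m)"
    by (rule distrib_right)
  also have "\<dots> \<le> a * x + ?c * y"
    using mult_left_mono[OF x less_imp_le[OF assms(1)]] mult_left_mono[OF y c] by (rule add_mono)
  finally show ?thesis .
qed

lemma sum_move_drop_ge:
  assumes a: "0 < a" "a \<le> 1" and d: "0 < d" "d \<le> 1/4" and M: "M \<subseteq> cards n"
    and phase2: "(1 - d/2) * real (2*n) \<le> real (card M)" and u: "u \<in> cards n - M"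
  shows "a * (1-d)^2 / real (2*n) * phase2_weight n d u
    \<le> (\<Sum>v\<in>M. card_prob a n u * card_prob a n v * move_drop a n d u v)"
proof -
  define N where "N = real (2*n)"
  define x where "x = real (card (M \<inter> {..<n}))"
  define y where "y = real (card (M - {..<n}))"
  let ?w = "phase2_weight n d u"
  have n: "0 < n" and N: "0 < N"
    using u by (auto simp: N_def cards_def)
  have "finite M"
    using M by (rule finite_subset) simp
  note sum_eq = sum_move_drop_eq[OF a n this, of u d, folded N_def x_def y_def]
  have x: "(1 - d) * real n \<le> x" and y: "(1 - d) * real n \<le> y"
    unfolding x_def y_def using card_marked_of_each_type_ge[OF M phase2] by auto
  show ?thesis
  proof (cases "is_acard n u")
    case True
    have "(1-d)^2 * N \<le> a * x + (2 - a - (2 - 2*a) * d) * y"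
      using acard_move_rate_ge[OF a d _ x y] by (simp add: N_def)
    then have "a / N / N * ((1-d)^2 * N) \<le> a / N / N * (a * x + (2 - a - (2 - 2*a) * d) * y)"
      using a N by (intro mult_left_mono) auto
    moreover have "a * (1-d)^2 / N * ?w = a / N / N * ((1-d)^2 * N)"
      using True N by (simp add: phase2_weight_def power2_eq_square)
    moreover have pu: "card_prob a n u = a / N"
      using True by (simp add: card_prob_def weight_def N_def)
    ultimately show ?thesis
      using True N unfolding sum_eq unfolding pu N_def[symmetric] by (simp add: phase2_weight_def field_simps)
  next
    case False
    have "x + y = real (card M)"
      unfolding x_def y_def using card_Int_Diff[OF \<open>finite M\<close>, of "{..<n}"] by simp
    have "(1-d)^2 \<le> 1 - d/2"
      using d by (simp add: power2_eq_square algebra_simps)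
    then have "(1-d)^2 * N \<le> (1 - d/2) * N"
      using N by (intro mult_right_mono) auto
    also have "\<dots> \<le> 1 * (x + y)"
      using phase2 \<open>x + y = real (card M)\<close> by (simp add: N_def)
    also have "\<dots> \<le> (2 - a) * (x + y)"
      using a by (intro mult_right_mono) (auto simp: x_def y_def)
    finally have "a * d / N / N * ((1-d)^2 * N) \<le> a * d / N / N * ((2 - a) * (x + y))"
      using a d N by (intro mult_left_mono) auto
    moreover have "a * (1-d)^2 / N * ?w = a * d / N / N * ((1-d)^2 * N)"
      using False N by (simp add: phase2_weight_def power2_eq_square)
    moreover have pu: "card_prob a n u = (2 - a) / N"
      using False by (simp add: card_prob_def weight_def N_def)
    ultimately show ?thesis
      using False N unfolding sum_eq unfolding pu N_def[symmetric] by (simp add: phase2_weight_def field_simps)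
  qed
qed

section \<open>Drift of the potential\<close>

definition phase1_ratio :: "real \<Rightarrow> real \<Rightarrow> nat \<Rightarrow> real" where
  "phase1_ratio a d n = 1 + 16 / (d^2 * a^2 * real (2*n))"

definition contraction :: "real \<Rightarrow> real \<Rightarrow> nat \<Rightarrow> real" where
  "contraction a d n = 1 - 2 * a * (1-d)^2 / real (2*n)"

definition scheme_potential :: "real \<Rightarrow> real \<Rightarrow> nat \<Rightarrow> nat set \<Rightarrow> real" where
  "scheme_potential a d n = potential n (1 - d/2) d (phase1_ratio a d n)"

lemma one_le_phase1_ratio: "1 \<le> phase1_ratio a d n"
  by (simp add: phase1_ratio_def)

lemma scheme_potential_nonneg: "0 \<le> d \<Longrightarrow> 0 \<le> scheme_potential a d n M"
  unfolding scheme_potential_def by (rule potential_nonneg[OF _ one_le_phase1_ratio])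

lemma contraction_nonneg:
  assumes "0 < a" "a \<le> 1" "0 < d" "d \<le> 1/4" and large: "16 / (d^2 * a^2) \<le> real (2*n)"
  shows "0 \<le> contraction a d n"
proof -
  have "d^2 * a^2 \<le> 1 * 1"
    using assms by (intro mult_mono power_le_one) auto
  then have "16 \<le> 16 / (d^2 * a^2)"
    using assms by (simp add: field_simps)
  moreover have "2 * (a * (1-d)^2) \<le> 2 * (1 * 1)"
    using assms by (intro mult_left_mono mult_mono power_le_one) auto
  ultimately show ?thesis
    using large by (simp add: contraction_def field_simps)
qed

lemma phase1_contraction_ge:
  fixes N j :: real
  assumes "0 < a" "a \<le> 1" "0 < d" "d \<le> 1/4"
    and large: "16 / (d^2 * a^2) \<le> N" and j: "d * N / 2 \<le> j"
  shows "2 * a * (1-d)^2 / N \<le> (a * j / N)^2 * (1 - 1 / (1 + 16 / (d^2 * a^2 * N)))"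
proof -
  define b where "b = 16 / (d^2 * a^2)"
  have b: "0 < b"
    unfolding b_def using assms(1,3) by simp
  then have N: "0 < N"
    using large b_def by linarith
  have ratio_eq: "1 + 16 / (d^2 * a^2 * N) = (N + b) / N"
    using N unfolding b_def by (simp add: field_simps)
  have ratio: "1 - 1 / (1 + 16 / (d^2 * a^2 * N)) = b / (N + b)"
    unfolding ratio_eq using N b by (simp add: field_simps)
  have "(d * N / 2)^2 \<le> j^2"
    using j assms(3) N by (intro power_mono) auto
  then have "a^2 * (d * N / 2)^2 \<le> a^2 * j^2"
    by (rule mult_left_mono) simp
  then have "d^2 * a^2 / 4 \<le> (a * j / N)^2"
    using N by (simp add: power_divide power_mult_distrib field_simps)
  then have "d^2 * a^2 / 4 * (b / (N + b)) \<le> (a * j / N)^2 * (b / (N + b))"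
    using b N by (intro mult_right_mono) auto
  moreover have "d^2 * a^2 / 4 * (b / (N + b)) = 4 / (N + b)"
    unfolding b_def using assms(1,3) by (simp add: field_simps)
  moreover have "2 / N \<le> 4 / (N + b)"
  proof -
    have "N + b \<le> 2 * N"
      using large unfolding b_def by simp
    then have "4 / (2 * N) \<le> 4 / (N + b)"
      using N b by (intro divide_left_mono) auto
    then show ?thesis
      by simp
  qed
  moreover have "2 * a * (1-d)^2 / N \<le> 2 / N"
  proof -
    have "a * (1-d)^2 \<le> 1 * 1"
      using assms by (intro mult_mono power_le_one) auto
    then show ?thesis
      using N by (simp add: divide_right_mono)
  qed
  ultimately show ?thesis
    unfolding ratio by linarith
qed

lemma phase1_potential_Suc_le:
  assumes "1 \<le> rho" "k < 2*n"
  shows "0 \<le> phase1_potential n rho (Suc k)" "phase1_potential n rho (Suc k) \<le> phase1_potential n rho k"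
proof -
  show P1: "0 \<le> phase1_potential n rho (Suc k)"
    using phase1_potential_ge[OF assms(1), of n "Suc k"] of_nat_0_le_iff[of "2*n"] by linarith
  show "phase1_potential n rho (Suc k) \<le> phase1_potential n rho k"
    unfolding phase1_potential_Suc[OF assms(2)] using mult_right_mono[OF assms(1) P1] by simp
qed

lemma phase1_potential_contraction:
  fixes j :: real
  assumes a: "0 < a" "a \<le> 1" and d: "0 < d" "d \<le> 1/4" and large: "16 / (d^2 * a^2) \<le> real (2*n)"
    and "k < 2*n" and j: "d * real (2*n) / 2 \<le> j"
  shows "phase1_potential n (phase1_ratio a d n) k - (a * j / real (2*n))^2
      * (phase1_potential n (phase1_ratio a d n) k - phase1_potential n (phase1_ratio a d n) (Suc k))
    \<le> contraction a d n * phase1_potential n (phase1_ratio a d n) k"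
proof -
  let ?rho = "phase1_ratio a d n" and ?N = "real (2*n)" and ?A = "(a * j / real (2*n))^2"
  let ?P0 = "phase1_potential n ?rho k" and ?P1 = "phase1_potential n ?rho (Suc k)"
  have P0: "0 \<le> ?P0"
    using phase1_potential_Suc_le[OF one_le_phase1_ratio[of a d n] \<open>k < 2*n\<close>] by linarith
  have "2 * a * (1-d)^2 / ?N \<le> ?A * (1 - 1 / ?rho)"
    unfolding phase1_ratio_def using phase1_contraction_ge[OF a d large j] .
  then have le: "?P0 * (2 * a * (1-d)^2 / ?N) \<le> ?P0 * (?A * (1 - 1 / ?rho))"
    using P0 by (rule mult_left_mono)
  have "?P0 - ?P1 = ?P0 * (1 - 1 / ?rho)"
    using phase1_potential_Suc[OF \<open>k < 2*n\<close>, of ?rho] one_le_phase1_ratio[of a d n] by (simp add: field_simps)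
  then have "?P0 - ?A * (?P0 - ?P1) = ?P0 - ?P0 * (?A * (1 - 1 / ?rho))"
    by (simp only: mult.left_commute)
  also have "\<dots> \<le> ?P0 - ?P0 * (2 * a * (1-d)^2 / ?N)"
    using le by linarith
  also have "\<dots> = contraction a d n * ?P0"
    unfolding contraction_def by (simp add: algebra_simps)
  finally show ?thesis .
qed

lemma scheme_potential_drift_phase1:
  assumes a: "0 < a" "a \<le> 1" and d: "0 < d" "d \<le> 1/4"
    and large: "16 / (d^2 * a^2) \<le> real (2*n)" and M: "M \<subseteq> cards n"
    and phase1: "real (card M) < (1 - d/2) * real (2*n)"
  shows "(\<integral>\<^sup>+x. ennreal (scheme_potential a d n x) \<partial>mark_step a n (1 - d/2) f M)
    \<le> ennreal (contraction a d n * scheme_potential a d n M)"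
proof -
  let ?rho = "phase1_ratio a d n" and ?N = "real (2*n)"
  let ?P0 = "phase1_potential n ?rho (card M)" and ?P1 = "phase1_potential n ?rho (Suc (card M))"
  define q where "q R L = (if R \<notin> M \<and> L \<notin> M then a^2 / (weight a n R * weight a n L) else 0)" for R L
  have "0 < 16 / (d^2 * a^2)"
    using a d by simp
  then have n: "0 < n"
    using large by linarith
  have "(1 - d/2) * ?N \<le> ?N"
    using d by (simp add: mult_left_le_one_le)
  then have "card M < 2*n"
    using phase1 by linarith
  note P1 = phase1_potential_Suc_le[OF one_le_phase1_ratio[of a d n] this]
  have q: "0 \<le> q R L" "q R L \<le> 1" for R L
    unfolding q_def using coin_prob2_le_1[OF a] weight_pos[OF a, of n R] weight_pos[OF a, of n L] by auto
  have "(\<integral>\<^sup>+x. ennreal (scheme_potential a d n x) \<partial>mark_step a n (1 - d/2) f M)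
      \<le> ennreal (\<Sum>R<2*n. \<Sum>L<2*n. card_prob a n R * card_prob a n L * (?P0 - q R L * (?P0 - ?P1)))"
  proof (rule nn_integral_mark_step_le[OF a n])
    fix R L
    show "(\<integral>\<^sup>+x. ennreal (scheme_potential a d n x) \<partial>mark_step_given a n (1 - d/2) f M R L)
        \<le> ennreal (?P0 - q R L * (?P0 - ?P1))"
      unfolding scheme_potential_def q_def
      by (rule nn_integral_mark_step_given_phase1)
         (use a d one_le_phase1_ratio phase1 finite_subset[OF M finite_cards] in auto)
    have "q R L * (?P0 - ?P1) \<le> 1 * (?P0 - ?P1)"
      using q P1 by (intro mult_right_mono) auto
    then show "0 \<le> ?P0 - q R L * (?P0 - ?P1)"
      using P1 by simp
  qed
  also have "\<dots> = ennreal (?P0 - (a * real (card (cards n - M)) / ?N)^2 * (?P0 - ?P1))"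
    unfolding q_def using phase1_average[OF a n M] by simp
  also have "\<dots> \<le> ennreal (contraction a d n * ?P0)"
  proof (intro ennreal_leI phase1_potential_contraction[OF a d large \<open>card M < 2*n\<close>])
    have "card (cards n - M) = 2*n - card M"
      using M by (simp add: card_Diff_subset finite_subset)
    then show "d * ?N / 2 \<le> real (card (cards n - M))"
      using phase1 \<open>card M < 2*n\<close> by (simp add: of_nat_diff algebra_simps)
  qed
  also have "?P0 = scheme_potential a d n M"
    using phase1 by (simp add: scheme_potential_def potential_def)
  finally show ?thesis .
qed

lemma scheme_potential_drift_phase2:
  assumes a: "0 < a" "a \<le> 1" and d: "0 < d" "d \<le> 1/4" and M: "M \<subseteq> cards n"
    and phase2: "(1 - d/2) * real (2*n) \<le> real (card M)" and not_full: "card M < 2*n"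
  shows "(\<integral>\<^sup>+x. ennreal (scheme_potential a d n x) \<partial>mark_step a n (1 - d/2) f M)
    \<le> ennreal (contraction a d n * scheme_potential a d n M)"
proof -
  let ?Phi = "phase2_potential n d M" and ?N = "real (2*n)"
  define loss where "loss R L = (if R \<notin> M \<and> L \<in> M then move_drop a n d R L
    else if R \<in> M \<and> L \<notin> M then move_drop a n d L R else 0)" for R L
  have n: "0 < n"
    using not_full by simp
  have "(\<integral>\<^sup>+x. ennreal (scheme_potential a d n x) \<partial>mark_step a n (1 - d/2) f M)
      \<le> ennreal (\<Sum>R<2*n. \<Sum>L<2*n. card_prob a n R * card_prob a n L * (?Phi - loss R L))"
  proof (rule nn_integral_mark_step_le[OF a n])
    fix R L
    assume "R < 2*n" "L < 2*n"
    then show "(\<integral>\<^sup>+x. ennreal (scheme_potential a d n x) \<partial>mark_step_given a n (1 - d/2) f M R L)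
        \<le> ennreal (?Phi - loss R L)"
      unfolding scheme_potential_def loss_def
      by (intro nn_integral_mark_step_given_phase2) (use a d M phase2 not_full in auto)
    have "move_drop a n d u v \<le> ?Phi" if "u < 2*n" "u \<notin> M" for u v
      using move_drop_le[OF a, of d n u v] phase2_weight_le_potential[of d u n M] that d
      by (auto simp: cards_def)
    then show "0 \<le> ?Phi - loss R L"
      using \<open>R < 2*n\<close> \<open>L < 2*n\<close> phase2_potential_nonneg[of d n M] d by (auto simp: loss_def)
  qed
  also have "\<dots> = ennreal (?Phi - 2 * (\<Sum>u\<in>cards n - M. \<Sum>v\<in>M. card_prob a n u * card_prob a n v * move_drop a n d u v))"
    unfolding loss_def using phase2_average[OF n M] by simp
  also have "\<dots> \<le> ennreal (?Phi - 2 * (\<Sum>u\<in>cards n - M. a * (1-d)^2 / ?N * phase2_weight n d u))"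
    using sum_move_drop_ge[OF a d M phase2] by (intro ennreal_leI diff_left_mono mult_left_mono sum_mono) auto
  also have "(\<Sum>u\<in>cards n - M. a * (1-d)^2 / ?N * phase2_weight n d u) = a * (1-d)^2 / ?N * ?Phi"
    unfolding phase2_potential_def by (rule sum_distrib_left[symmetric])
  also have "?Phi - 2 * (a * (1-d)^2 / ?N * ?Phi) = contraction a d n * ?Phi"
    by (simp add: contraction_def algebra_simps)
  also have "?Phi = scheme_potential a d n M"
    using phase2 by (simp add: scheme_potential_def potential_phase2)
  finally show ?thesis .
qed

lemma scheme_potential_drift:
  assumes a: "0 < a" "a \<le> 1" and d: "0 < d" "d \<le> 1/4"
    and large: "16 / (d^2 * a^2) \<le> real (2*n)" and M: "M \<subseteq> cards n"
  shows "(\<integral>\<^sup>+x. ennreal (scheme_potential a d n x) \<partial>mark_step a n (1 - d/2) f M)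
    \<le> ennreal (contraction a d n * scheme_potential a d n M)"
proof -
  consider "real (card M) < (1 - d/2) * real (2*n)"
    | "(1 - d/2) * real (2*n) \<le> real (card M)" "card M < 2*n" | "2*n \<le> card M"
    by linarith
  then show ?thesis
  proof cases
    case 3
    have "0 < 16 / (d^2 * a^2)"
      using a d by simp
    then have n: "0 < n"
      using large by linarith
    have "M = cards n"
      using M 3 by (metis card_cards card_seteq finite_cards)
    moreover have "(1 - d/2) * real (2*n) \<le> real (card M)"
    proof -
      have "(1 - d/2) * real (2*n) \<le> real (2*n)"
        using d by (simp add: mult_left_le_one_le)
      also have "\<dots> \<le> real (card M)"
        using 3 by linarith
      finally show ?thesis .
    qed
    ultimately have "scheme_potential a d n M = 0"
      by (simp add: scheme_potential_def potential_phase2 phase2_potential_def)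
    moreover have "mark_step_given a n (1 - d/2) f M R L = return_pmf M" for R L
      using 3 by (simp add: mark_step_given_def Let_def)
    ultimately have "(\<integral>\<^sup>+x. ennreal (scheme_potential a d n x) \<partial>mark_step a n (1 - d/2) f M)
        \<le> ennreal (\<Sum>R<2*n. \<Sum>L<2*n. card_prob a n R * card_prob a n L * 0)"
      by (intro nn_integral_mark_step_le[OF a n]) auto
    then show ?thesis
      by simp
  qed (use scheme_potential_drift_phase1[OF a d large M] scheme_potential_drift_phase2[OF a d M] in auto)
qed

section \<open>Tail bound for the marking time\<close>

lemma valid_assignment_THE_mem:
  assumes "valid_assignment n M f" "\<exists>u\<in>cards n - M. f u = (R, L)"
  shows "(THE u. u \<in> cards n - M \<and> f u = (R, L)) \<in> cards n"
proof -
  obtain u where u: "u \<in> cards n - M" "f u = (R, L)"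
    using assms(2) by auto
  have inj: "inj_on f (cards n - M)"
    using assms(1) by (simp add: valid_assignment_def)
  have "(THE u. u \<in> cards n - M \<and> f u = (R, L)) = u"
    using u by (intro the_equality) (auto intro: inj_onD[OF inj])
  then show ?thesis
    using u by simp
qed

lemma set_pmf_mark_step:
  assumes "0 < a" "a \<le> 1" "0 < n" "M \<subseteq> cards n"
    and valid: "c1 * real (2*n) \<le> real (card M) \<Longrightarrow> card M < 2*n \<Longrightarrow> valid_assignment n M f"
  shows "set_pmf (mark_step a n c1 f M) \<subseteq> Pow (cards n)"
proof
  fix x
  assume "x \<in> set_pmf (mark_step a n c1 f M)"
  then obtain R L where "R < 2*n" "L < 2*n" and x: "x \<in> set_pmf (mark_step_given a n c1 f M R L)"
    using set_pmf_card_pmf[OF assms(1-3)] unfolding mark_step_def by auto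
  then have RL: "R \<in> cards n" "L \<in> cards n"
    by (auto simp: cards_def)
  show "x \<in> Pow (cards n)"
  proof (cases "c1 * real (2*n) \<le> real (card M) \<and> card M < 2*n")
    case True
    then show ?thesis
      using x RL assms(4) valid_assignment_THE_mem[OF valid]
      unfolding mark_step_given_def Let_def by (auto split: if_splits)
  next
    case False
    then show ?thesis
      using x RL assms(4) unfolding mark_step_given_def Let_def by (auto split: if_splits)
  qed
qed

lemma prob_not_all_marked_le:
  assumes a: "0 < a" "a \<le> 1" and d: "0 < d" "d \<le> 1/4"
    and large: "16 / (d^2 * a^2) \<le> real (2*n)"
    and valid: "\<And>t M. M \<subseteq> cards n \<Longrightarrow> (1 - d/2) * real (2*n) \<le> real (card M) \<Longrightarrow> card M < 2*n
      \<Longrightarrow> valid_assignment n M (asg t M)"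
  shows "measure_pmf.prob (marked a n (1 - d/2) asg T) {M. M \<noteq> cards n}
    \<le> contraction a d n ^ T * scheme_potential a d n {} / d"
proof -
  let ?P = "marked a n (1 - d/2) asg" and ?V = "scheme_potential a d n" and ?g = "contraction a d n"
  have "0 < 16 / (d^2 * a^2)"
    using a d by simp
  then have n: "0 < n"
    using large by linarith
  have V: "0 \<le> ?V M" for M
    using d by (intro scheme_potential_nonneg) simp
  have g: "0 \<le> ?g"
    by (rule contraction_nonneg[OF a d large])
  have step: "?P (Suc t) = ?P t \<bind> (\<lambda>M. mark_step a n (1 - d/2) (asg t M) M)" for t
    by simp
  have closed: "set_pmf (mark_step a n (1 - d/2) (asg t M) M) \<subseteq> Pow (cards n)" if "M \<in> Pow (cards n)" for t M
    using that valid by (intro set_pmf_mark_step[OF a n]) auto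
  have drift: "(\<integral>\<^sup>+x. ennreal (?V x) \<partial>mark_step a n (1 - d/2) (asg t M) M) \<le> ennreal (?g * ?V M)"
    if "M \<in> Pow (cards n)" for t M
    using that by (intro scheme_potential_drift[OF a d large]) auto
  note iterated = nn_integral_iterated_bind_pmf_le[of ?P _ "Pow (cards n)", OF step _ closed drift g V]
  have "(\<integral>\<^sup>+x. ennreal (?V x) \<partial>?P T) \<le> ennreal (?g ^ T) * ennreal (?V {})"
    using iterated(2)[of T] by simp
  also have "\<dots> = ennreal (?g ^ T * ?V {})"
    using g V by (simp add: ennreal_mult)
  finally have bound: "(\<integral>\<^sup>+x. ennreal (?V x) \<partial>?P T) \<le> ennreal (?g ^ T * ?V {})" .
  show ?thesis
  proof (rule measure_pmf_prob_le_nn_integral[OF d(1) _ V _ bound])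
    show "0 \<le> ?g ^ T * ?V {}"
      using g V by simp
    fix M
    assume "M \<in> set_pmf (?P T)" "M \<in> {M. M \<noteq> cards n}"
    then show "d \<le> ?V M"
      using iterated(1)[of T] d one_le_phase1_ratio unfolding scheme_potential_def by (intro potential_ge) auto
  qed
qed

lemma contraction_power_le:
  assumes a: "0 < a" "a \<le> 1" and d: "0 < d" "d \<le> 1/4" and "0 < n" and T: "x - 1 \<le> real T"
  shows "contraction a d n ^ T \<le> exp (2 - 2 * a * (1-d)^2 * x / real (2*n))"
proof -
  define N where "N = real (2*n)"
  define c where "c = 2 * a * (1-d)^2"
  have N: "2 \<le> N"
    using \<open>0 < n\<close> by (simp add: N_def)
  have "a * (1-d)^2 \<le> 1 * 1"
    using a d by (intro mult_mono power_le_one) auto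
  then have c: "0 \<le> c" "c \<le> 2"
    unfolding c_def using a by auto
  have "contraction a d n = 1 - c / N"
    unfolding contraction_def c_def N_def ..
  moreover have "0 \<le> 1 - c / N"
    using c N by (simp add: field_simps)
  ultimately have "contraction a d n ^ T \<le> exp (- (c / N)) ^ T"
    by (simp add: power_mono exp_ge_add_one_self[of "- (c / N)", simplified])
  also have "\<dots> = exp (- (c / N) * real T)"
    by (simp add: exp_of_nat_mult[symmetric] mult.commute)
  also have "\<dots> \<le> exp (- (c / N) * (x - 1))"
    using mult_left_mono_neg[OF T, of "- (c / N)"] c N by simp
  also have "\<dots> \<le> exp (2 - c * x / N)"
    using c N by (simp add: field_simps)
  finally show ?thesis
    unfolding c_def N_def .
qed

lemma scheme_potential_empty_le:
  assumes "0 < d" "d \<le> 1/4" "0 < n"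
  shows "scheme_potential a d n {} \<le> real (2*n) * exp (16 / (d^2 * a^2))"
proof -
  define N where "N = real (2*n)"
  define b where "b = 16 / (d^2 * a^2)"
  have N: "0 < N" "b \<ge> 0"
    using assms by (simp_all add: N_def b_def)
  have "scheme_potential a d n {} = N * (1 + b / N) ^ (2*n)"
    using assms N unfolding scheme_potential_def potential_def phase1_potential_def phase1_ratio_def N_def b_def
    by (simp add: field_simps)
  also have "(1 + b / N) ^ (2*n) \<le> exp (b / N) ^ (2*n)"
    using N by (intro power_mono) auto
  also have "\<dots> = exp b"
    using N by (simp add: exp_of_nat_mult[symmetric] N_def)
  finally show ?thesis
    using N unfolding N_def b_def by simp
qed

lemma prob_TN_gt_le:
  assumes a: "0 < a" "a \<le> 1" and d: "0 < d" "d \<le> 1/4" and "0 < \<epsilon>"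
    and large: "16 / (d^2 * a^2) \<le> real (2*n)"
    and valid: "\<And>t M. M \<subseteq> cards n \<Longrightarrow> (1 - d/2) * real (2*n) \<le> real (card M) \<Longrightarrow> card M < 2*n
      \<Longrightarrow> valid_assignment n M (asg t M)"
  shows "prob_TN_gt a n (1 - d/2) asg ((1 + \<epsilon>) * (1 / (2*a)) * real (2*n) * ln (real (2*n)))
    \<le> exp (16 / (d^2 * a^2) + 2) / d * real (2*n) powr (1 - (1-d)^2 * (1 + \<epsilon>))"
proof -
  define N where "N = real (2*n)"
  define s where "s = (1-d)^2 * (1 + \<epsilon>)"
  define x where "x = (1 + \<epsilon>) * (1 / (2*a)) * N * ln N"
  define T where "T = nat \<lfloor>x\<rfloor>"
  have "0 < 16 / (d^2 * a^2)"
    using a d by simp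
  then have n: "0 < n"
    using large by linarith
  then have N: "2 \<le> N"
    by (simp add: N_def)
  have "x - 1 \<le> real T"
    unfolding T_def x_def using a \<open>0 < \<epsilon>\<close> N by simp
  then have "contraction a d n ^ T \<le> exp (2 - 2 * a * (1-d)^2 * x / N)"
    unfolding N_def by (rule contraction_power_le[OF a d n])
  moreover have "2 * a * (1-d)^2 * x / N = s * ln N"
    unfolding x_def s_def using a N by (simp add: field_simps)
  ultimately have "contraction a d n ^ T \<le> exp (2 - s * ln N)"
    by simp
  moreover have "0 \<le> scheme_potential a d n {}"
    using d by (intro scheme_potential_nonneg) simp
  ultimately have "contraction a d n ^ T * scheme_potential a d n {} / d
      \<le> exp (2 - s * ln N) * (N * exp (16 / (d^2 * a^2))) / d"
    using scheme_potential_empty_le[OF d n, of a] d unfolding N_def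
    by (intro divide_right_mono mult_mono) auto
  moreover have "prob_TN_gt a n (1 - d/2) asg x \<le> contraction a d n ^ T * scheme_potential a d n {} / d"
    unfolding prob_TN_gt_def T_def[symmetric] by (rule prob_not_all_marked_le[OF a d large valid])
  moreover have "exp (2 - s * ln N) * (N * exp (16 / (d^2 * a^2))) / d
      = exp (16 / (d^2 * a^2) + 2) / d * N powr (1 - s)"
    using N by (simp add: powr_def exp_add exp_diff algebra_simps)
  ultimately show ?thesis
    unfolding x_def N_def s_def by linarith
qed

lemma prob_TN_gt_tendsto_zero:
  assumes a: "0 < a" "a \<le> 1" and d: "0 < d" "d \<le> 1/4" and "0 < \<epsilon>"
    and exponent: "1 < (1-d)^2 * (1 + \<epsilon>)"
    and valid: "\<forall>n t M. M \<subseteq> cards n \<and> (1 - d/2) * real (2*n) \<le> real (card M) \<and> card M < 2*n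
      \<longrightarrow> valid_assignment n M (asg n t M)"
  shows "(\<lambda>n. prob_TN_gt a n (1 - d/2) (asg n)
    ((1 + \<epsilon>) * (1 / (2*a)) * real (2*n) * ln (real (2*n)))) \<longlonglongrightarrow> 0"
proof -
  define C where "C = exp (16 / (d^2 * a^2) + 2) / d"
  define s where "s = (1-d)^2 * (1 + \<epsilon>)"
  have "filterlim (\<lambda>n. real (2*n)) at_top sequentially"
    by (rule filterlim_compose[OF filterlim_real_sequentially filterlim_subseq]) (auto simp: strict_mono_def)
  then have lim: "(\<lambda>n. C * real (2*n) powr (1 - s)) \<longlonglongrightarrow> 0"
    using exponent unfolding s_def by (intro tendsto_mult_right_zero tendsto_neg_powr) auto
  have upper: "eventually (\<lambda>n. prob_TN_gt a n (1 - d/2) (asg n)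
      ((1 + \<epsilon>) * (1 / (2*a)) * real (2*n) * ln (real (2*n))) \<le> C * real (2*n) powr (1 - s)) sequentially"
  proof (rule eventually_sequentiallyI[of "nat \<lceil>16 / (d^2 * a^2)\<rceil>"])
    fix n
    assume "nat \<lceil>16 / (d^2 * a^2)\<rceil> \<le> n"
    then have "16 / (d^2 * a^2) \<le> real (2*n)"
      by linarith
    then show "prob_TN_gt a n (1 - d/2) (asg n) ((1 + \<epsilon>) * (1 / (2*a)) * real (2*n) * ln (real (2*n)))
        \<le> C * real (2*n) powr (1 - s)"
      unfolding C_def s_def by (rule prob_TN_gt_le[OF a d \<open>0 < \<epsilon>\<close>]) (use valid in blast)
  qed
  have lower: "eventually (\<lambda>n. 0 \<le> prob_TN_gt a n (1 - d/2) (asg n)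
      ((1 + \<epsilon>) * (1 / (2*a)) * real (2*n) * ln (real (2*n)))) sequentially"
    by (simp add: prob_TN_gt_def)
  show ?thesis
    by (rule tendsto_sandwich[OF lower upper tendsto_const lim])
qed

theorem mainTheorem7:
  fixes a :: real
  assumes "0 < a" and "a \<le> 1"
  shows "\<forall>\<epsilon>>0. \<exists>c1. 1/2 < c1 \<and> c1 < 1 \<and>
           (\<forall>asg :: nat \<Rightarrow> nat \<Rightarrow> nat set \<Rightarrow> nat \<Rightarrow> nat \<times> nat.
              (\<forall>n t M. M \<subseteq> cards n \<and> c1 * real (2*n) \<le> real (card M) \<and> card M < 2*n
                 \<longrightarrow> valid_assignment n M (asg n t M)) \<longrightarrow>
              (\<lambda>n. prob_TN_gt a n c1 (asg n)
                     ((1 + \<epsilon>) * (1 / (2*a)) * real (2*n) * ln (real (2*n))))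
                \<longlonglongrightarrow> 0)"
proof (intro allI impI)
  fix \<epsilon> :: real
  assume "0 < \<epsilon>"
  define d where "d = \<epsilon> / (4 * (1 + \<epsilon>))"
  have d: "0 < d" "d \<le> 1/4"
    unfolding d_def using \<open>0 < \<epsilon>\<close> by (auto simp: field_simps)
  have "1 + \<epsilon>/2 = (1 - 2*d) * (1 + \<epsilon>)"
    unfolding d_def using \<open>0 < \<epsilon>\<close> by (simp add: field_simps)
  also have "\<dots> \<le> (1-d)^2 * (1 + \<epsilon>)"
    using \<open>0 < \<epsilon>\<close> by (intro mult_right_mono) (auto simp: power2_eq_square algebra_simps)
  finally have "1 < (1-d)^2 * (1 + \<epsilon>)"
    using \<open>0 < \<epsilon>\<close> by linarith
  then show "\<exists>c1. 1/2 < c1 \<and> c1 < 1 \<and> (\<forall>asg. (\<forall>n t M. M \<subseteq> cards n \<and> c1 * real (2*n) \<le> real (card M)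
      \<and> card M < 2*n \<longrightarrow> valid_assignment n M (asg n t M)) \<longrightarrow>
    (\<lambda>n. prob_TN_gt a n c1 (asg n) ((1 + \<epsilon>) * (1 / (2*a)) * real (2*n) * ln (real (2*n)))) \<longlonglongrightarrow> 0)"
    using d by (intro exI[of _ "1 - d/2"] conjI allI impI prob_TN_gt_tendsto_zero[OF assms d \<open>0 < \<epsilon>\<close>]) auto
qed

end
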